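(* Let $f,g\in C[0,1]$ and let $\mathcal{R}$ be the ring of functions of the form $P(f,g)$, $x\mapsto p(f(x),g(x))$, where $p$ ranges over polynomials in two variables with real coefficients. Then for every $P(f,g)\in\mathcal{R}$, $$\overline{\dim}_B G(P(f,g))\le \max\{\overline{\dim}_B G(f),\ \overline{\dim}_B G(g)\}.$$
   Context: $C[0,1]$ is the space of real-valued continuous functions on $[0,1]$; $G(h)=\{(x,h(x)):x\in[0,1]\}\subset\mathbb{R}^2$ is the graph of $h$. For a nonempty bounded set $F$, $N_\delta(F)$ is the smallest number of sets of diameter at most $\delta$ covering $F$, and $\overline{\dim}_B F=\limsup_{\delta\to0}\frac{\log N_\delta(F)}{-\log\delta}$. *)

theory Defs
  imports "HOL-Analysis.Analysis"
begin

definition poly2_funs :: "(real \<Rightarrow> real \<Rightarrow> real) set" where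
  "poly2_funs = {p. \<exists>(n::nat) (c::nat \<Rightarrow> nat \<Rightarrow> real).
      p = (\<lambda>x y. \<Sum>i\<le>n. \<Sum>j\<le>n. c i j * x ^ i * y ^ j)}"

definition graph01 :: "(real \<Rightarrow> real) \<Rightarrow> (real \<times> real) set" where
  "graph01 h = {(x, h x) | x. x \<in> {0..1}}"

definition cover_num :: "real \<Rightarrow> 'a::metric_space set \<Rightarrow> nat" where
  "cover_num \<delta> F = (INF C \<in> {C. finite C \<and> (\<forall>S\<in>C. diameter S \<le> \<delta>) \<and> F \<subseteq> \<Union>C}. card C)"

definition upper_box_dim :: "'a::metric_space set \<Rightarrow> ereal" where
  "upper_box_dim F = Limsup (at_right 0)
      (\<lambda>\<delta>. ereal (ln (real (cover_num \<delta> F)) / - ln \<delta>))"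

end

theory Submission
  imports Defs "HOL-Real_Asymp.Real_Asymp"
begin

text \<open>For \<open>h = p(f, g)\<close> the boundedness of \<open>f\<close> and \<open>g\<close> gives
  \<open>\<bar>h x - h y\<bar> \<le> L (\<bar>f x - f y\<bar> + \<bar>g x - g y\<bar>)\<close>. Cut \<open>[0, 1]\<close> into columns of width \<open>w\<close> and take
  optimal covers of \<open>G(f)\<close> and \<open>G(g)\<close> by sets of diameter at most \<open>2w\<close>. The values of \<open>f\<close> on a
  column form an interval covered by the vertical projections of the \<open>a\<^sub>j\<close> cover sets meeting the
  column, so \<open>f\<close> oscillates by at most \<open>4w a\<^sub>j\<close> there, and likewise for \<open>g\<close>. Hence the part of
  \<open>G(h)\<close> above the column lies in \<open>O(\<bar>L\<bar> (a\<^sub>j + b\<^sub>j))\<close> squares of side \<open>w\<close>. A cover set meets at most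
  four columns, so summing over the columns gives
  \<open>N\<^sub>2\<^sub>w(G(h)) \<le> C (N\<^sub>2\<^sub>w(G(f)) + N\<^sub>2\<^sub>w(G(g)))\<close>, and taking logarithms bounds the upper box dimension.\<close>

definition dominated_on :: "'a set \<Rightarrow> ('a \<Rightarrow> real) \<Rightarrow> ('a \<Rightarrow> real) \<Rightarrow> ('a \<Rightarrow> real) \<Rightarrow> bool" where
  "dominated_on S f g h \<longleftrightarrow> bounded (h ` S) \<and>
     (\<exists>L. \<forall>x\<in>S. \<forall>y\<in>S. \<bar>h x - h y\<bar> \<le> L * (\<bar>f x - f y\<bar> + \<bar>g x - g y\<bar>))"

lemma dominated_on_const: "dominated_on S f g (\<lambda>x. c)"
  unfolding dominated_on_def bounded_iff by (auto intro: exI[of _ 0] exI[of _ "\<bar>c\<bar>"])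

lemma dominated_on_add:
  assumes "dominated_on S f g h1" "dominated_on S f g h2"
  shows "dominated_on S f g (\<lambda>x. h1 x + h2 x)"
proof -
  from assms obtain L1 L2 where
    L1: "\<forall>x\<in>S. \<forall>y\<in>S. \<bar>h1 x - h1 y\<bar> \<le> L1 * (\<bar>f x - f y\<bar> + \<bar>g x - g y\<bar>)" and
    L2: "\<forall>x\<in>S. \<forall>y\<in>S. \<bar>h2 x - h2 y\<bar> \<le> L2 * (\<bar>f x - f y\<bar> + \<bar>g x - g y\<bar>)"
    unfolding dominated_on_def by blast
  have "\<bar>h1 x + h2 x - (h1 y + h2 y)\<bar> \<le> (L1 + L2) * (\<bar>f x - f y\<bar> + \<bar>g x - g y\<bar>)"
    if "x \<in> S" "y \<in> S" for x y
  proof -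
    have "\<bar>h1 x - h1 y\<bar> \<le> L1 * (\<bar>f x - f y\<bar> + \<bar>g x - g y\<bar>)"
      "\<bar>h2 x - h2 y\<bar> \<le> L2 * (\<bar>f x - f y\<bar> + \<bar>g x - g y\<bar>)"
      using L1 L2 that by auto
    then show ?thesis by (simp add: distrib_right) linarith
  qed
  moreover have "bounded ((\<lambda>x. h1 x + h2 x) ` S)"
    using assms unfolding dominated_on_def by (auto intro: bounded_plus_comp)
  ultimately show ?thesis unfolding dominated_on_def by blast
qed

lemma dominated_on_mult:
  assumes "dominated_on S f g h1" "dominated_on S f g h2"
  shows "dominated_on S f g (\<lambda>x. h1 x * h2 x)"
proof -
  from assms obtain B1 B2 L1 L2 where
    B1: "\<And>x. x \<in> S \<Longrightarrow> \<bar>h1 x\<bar> \<le> B1" and B2: "\<And>x. x \<in> S \<Longrightarrow> \<bar>h2 x\<bar> \<le> B2" and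
    L1: "\<forall>x\<in>S. \<forall>y\<in>S. \<bar>h1 x - h1 y\<bar> \<le> L1 * (\<bar>f x - f y\<bar> + \<bar>g x - g y\<bar>)" and
    L2: "\<forall>x\<in>S. \<forall>y\<in>S. \<bar>h2 x - h2 y\<bar> \<le> L2 * (\<bar>f x - f y\<bar> + \<bar>g x - g y\<bar>)"
    unfolding dominated_on_def bounded_iff by fastforce
  have "\<bar>h1 x * h2 x - h1 y * h2 y\<bar> \<le> (B1 * L2 + B2 * L1) * (\<bar>f x - f y\<bar> + \<bar>g x - g y\<bar>)"
    if x: "x \<in> S" and y: "y \<in> S" for x y
  proof -
    define D where "D = \<bar>f x - f y\<bar> + \<bar>g x - g y\<bar>"
    have "\<bar>h1 x * h2 x - h1 y * h2 y\<bar> = \<bar>h1 x * (h2 x - h2 y) + h2 y * (h1 x - h1 y)\<bar>"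
      by (simp add: algebra_simps)
    also have "\<dots> \<le> \<bar>h1 x\<bar> * \<bar>h2 x - h2 y\<bar> + \<bar>h2 y\<bar> * \<bar>h1 x - h1 y\<bar>"
      by (metis abs_mult abs_triangle_ineq)
    also have "\<dots> \<le> B1 * (L2 * D) + B2 * (L1 * D)"
      using B1[OF x] B2[OF y] L1 L2 x y unfolding D_def
      by (intro add_mono mult_mono) auto
    finally show ?thesis unfolding D_def by (simp add: algebra_simps)
  qed
  moreover have "bounded ((\<lambda>x. h1 x * h2 x) ` S)"
    unfolding bounded_iff using B1 B2
    by (intro exI[of _ "B1 * B2"]) (auto simp: abs_mult intro: mult_mono order.trans[OF abs_ge_zero])
  ultimately show ?thesis unfolding dominated_on_def by blast
qed

lemma dominated_on_sum:
  "finite I \<Longrightarrow> (\<And>i. i \<in> I \<Longrightarrow> dominated_on S f g (h i)) \<Longrightarrow> dominated_on S f g (\<lambda>x. \<Sum>i\<in>I. h i x)"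
  by (induction I rule: finite_induct) (auto intro: dominated_on_add dominated_on_const)

lemma dominated_on_power: "dominated_on S f g h \<Longrightarrow> dominated_on S f g (\<lambda>x. h x ^ n)"
  by (induction n) (auto intro: dominated_on_mult dominated_on_const)

lemma dominated_on_left: "bounded (f ` S) \<Longrightarrow> dominated_on S f g f"
  unfolding dominated_on_def by (auto intro: exI[of _ 1])

lemma dominated_on_right: "bounded (g ` S) \<Longrightarrow> dominated_on S f g g"
  unfolding dominated_on_def by (auto intro: exI[of _ 1])

lemma dominated_on_poly2:
  assumes "bounded (f ` S)" "bounded (g ` S)" "p \<in> poly2_funs"
  shows "dominated_on S f g (\<lambda>x. p (f x) (g x))"
proof -
  from assms(3) obtain n c where "p = (\<lambda>x y. \<Sum>i\<le>n. \<Sum>j\<le>n. c i j * x ^ i * y ^ j)"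
    by (auto simp: poly2_funs_def)
  then show ?thesis
    by (auto intro!: dominated_on_sum dominated_on_mult dominated_on_const dominated_on_power
        dominated_on_left dominated_on_right assms(1,2))
qed

lemma cover_num_le_card:
  assumes "finite C" "\<forall>S\<in>C. diameter S \<le> \<delta>" "F \<subseteq> \<Union>C"
  shows "cover_num \<delta> F \<le> card C"
  unfolding cover_num_def using assms by (intro cINF_lower) auto

lemma cover_num_attained:
  fixes F :: "'a::euclidean_space set"
  assumes "compact F" "\<delta> > 0"
  obtains C where "finite C" "\<forall>S\<in>C. diameter S \<le> \<delta>" "F \<subseteq> \<Union>C" "card C = cover_num \<delta> F"
proof -
  define X where "X = {C. finite C \<and> (\<forall>S\<in>C. diameter S \<le> \<delta>) \<and> F \<subseteq> \<Union>C}"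
  have "F \<subseteq> (\<Union>x\<in>F. ball x (\<delta>/2))" using assms(2) by auto
  then obtain K where "K \<subseteq> F" "finite K" "F \<subseteq> (\<Union>x\<in>K. ball x (\<delta>/2))"
    using compactE_image[OF assms(1), of F "\<lambda>x. ball x (\<delta>/2)"] by auto
  then have "(\<lambda>x. ball x (\<delta>/2)) ` K \<in> X" using assms(2) unfolding X_def by auto
  then have "Inf (card ` X) \<in> card ` X" by (intro Inf_nat_def1) auto
  then obtain C where "C \<in> X" "card C = Inf (card ` X)" by auto
  then show ?thesis using that unfolding X_def cover_num_def by blast
qed

lemma cover_num_pos:
  fixes F :: "'a::euclidean_space set"
  assumes "compact F" "F \<noteq> {}" "\<delta> > 0"
  shows "0 < cover_num \<delta> F"
proof -
  obtain C where "finite C" "F \<subseteq> \<Union>C" "card C = cover_num \<delta> F"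
    using cover_num_attained[OF assms(1,3)] by metis
  then show ?thesis using assms(2) by (metis Union_empty card_gt_0_iff subset_empty)
qed

lemma compact_graph01:
  assumes "continuous_on {0..1} \<phi>"
  shows "compact (graph01 \<phi>)"
proof -
  have "graph01 \<phi> = (\<lambda>x. (x, \<phi> x)) ` {0..1}" unfolding graph01_def by auto
  moreover have "continuous_on {0..1} (\<lambda>x. (x, \<phi> x))"
    by (intro continuous_on_Pair continuous_on_id assms)
  ultimately show ?thesis using compact_continuous_image compact_Icc by metis
qed

lemma diameter_unbounded:
  fixes S :: "'a::metric_space set"
  assumes "S \<noteq> {}" "\<not> bounded S"
  shows "diameter S = (LEAST z::real. False)"
proof -
  obtain a where a: "a \<in> S" using assms(1) by auto
  have "(\<lambda>z. \<forall>d\<in>(\<lambda>(x,y). dist x y) ` (S \<times> S). d \<le> z) = (\<lambda>z. False)"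
    using a assms(2) unfolding bounded_def by fastforce
  then show ?thesis unfolding diameter_def Sup_real_def using assms(1) by simp
qed

definition column :: "real \<Rightarrow> nat \<Rightarrow> real set" where
  "column w j = {real j * w .. (real j + 1) * w} \<inter> {0..1}"

definition meets_column :: "(real \<Rightarrow> real) \<Rightarrow> real \<Rightarrow> nat \<Rightarrow> (real \<times> real) set \<Rightarrow> bool" where
  "meets_column \<phi> w j S \<longleftrightarrow> (\<exists>z\<in>column w j. (z, \<phi> z) \<in> S)"

lemma column_cover:
  assumes "w > 0" "x \<in> {0..1}"
  obtains j where "j < nat \<lceil>1/w\<rceil>" "x \<in> column w j"
proof -
  define K where "K = nat \<lceil>1/w\<rceil>"
  define j where "j = min (nat \<lfloor>x/w\<rfloor>) (K - 1)"
  have "1/w \<le> real K" unfolding K_def by (rule real_nat_ceiling_ge)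
  then have K1: "1 \<le> real K * w" using assms(1) by (simp add: field_simps)
  then have K: "K \<ge> 1" using assms(1) by (cases K) auto
  have "of_int \<lfloor>x/w\<rfloor> * w \<le> x/w * w"
    using assms(1) by (intro mult_right_mono) auto
  moreover have "x/w * w \<le> (of_int \<lfloor>x/w\<rfloor> + 1) * w"
    using assms(1) by (intro mult_right_mono) linarith+
  moreover have "real (nat \<lfloor>x/w\<rfloor>) = of_int \<lfloor>x/w\<rfloor>" using assms by simp
  ultimately have fl: "real (nat \<lfloor>x/w\<rfloor>) * w \<le> x" "x \<le> (real (nat \<lfloor>x/w\<rfloor>) + 1) * w"
    using assms(1) by simp_all
  have "real j * w \<le> real (nat \<lfloor>x/w\<rfloor>) * w"
    using assms(1) unfolding j_def by (intro mult_right_mono) auto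
  then have left: "real j * w \<le> x" using fl(1) by linarith
  have right: "x \<le> (real j + 1) * w"
  proof (cases "nat \<lfloor>x/w\<rfloor> \<le> K - 1")
    case True then show ?thesis using fl(2) by (simp add: j_def)
  next
    case False
    then have "(real j + 1) * w = real K * w" using K by (simp add: j_def of_nat_diff)
    moreover have "x \<le> 1" using assms(2) by simp
    ultimately show ?thesis using K1 by linarith
  qed
  have "j < K" using K by (simp add: j_def)
  moreover have "x \<in> column w j" using left right assms(2) unfolding column_def by simp
  ultimately show ?thesis using that unfolding K_def by blast
qed

lemma left_end_in_column:
  assumes "w > 0" "j < nat \<lceil>1/w\<rceil>"
  shows "real j * w \<in> column w j"
proof -
  have "real j < 1/w" using assms(2) by (simp add: zless_nat_eq_int_zless less_ceiling_iff)
  then have "real j * w \<le> 1" using assms(1) by (simp add: field_simps)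
  then show ?thesis using assms(1) unfolding column_def by simp
qed

lemma oscillation_le_card_meets_column:
  assumes cont: "continuous_on {0..1} \<phi>" and fin: "finite A" and cov: "graph01 \<phi> \<subseteq> \<Union>A"
    and small: "\<And>S. S \<in> A \<Longrightarrow> bounded S \<and> diameter S \<le> \<delta>" and "0 \<le> \<delta>"
    and x: "x \<in> column w j" and y: "y \<in> column w j"
  shows "\<bar>\<phi> x - \<phi> y\<bar> \<le> 2 * \<delta> * card {S\<in>A. meets_column \<phi> w j S}"
proof -
  define A' where "A' = {S\<in>A. meets_column \<phi> w j S}"
  define c where "c S = snd (SOME p. p \<in> S)" for S :: "(real \<times> real) set"
  have "connected (\<phi> ` column w j)"
    by (rule connected_continuous_image[OF continuous_on_subset[OF cont]])
      (auto simp: column_def intro!: convex_connected convex_Int)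
  then have interval: "{min (\<phi> x) (\<phi> y) .. max (\<phi> x) (\<phi> y)} \<subseteq> \<phi> ` column w j"
    using x y by (intro connected_contains_Icc) (auto simp: min_def max_def)
  have covered: "{min (\<phi> x) (\<phi> y) .. max (\<phi> x) (\<phi> y)} \<subseteq> (\<Union>S\<in>A'. cball (c S) \<delta>)"
  proof
    fix t assume "t \<in> {min (\<phi> x) (\<phi> y) .. max (\<phi> x) (\<phi> y)}"
    then obtain z where z: "z \<in> column w j" "t = \<phi> z" using interval by auto
    then have "(z, t) \<in> graph01 \<phi>" unfolding graph01_def column_def by auto
    then obtain S where S: "S \<in> A" "(z, t) \<in> S" using cov by auto
    then have "S \<in> A'" using z unfolding A'_def meets_column_def by auto
    have "bounded S" "diameter S \<le> \<delta>" using small[OF S(1)] by auto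
    moreover have "(SOME p. p \<in> S) \<in> S" using S(2) by (rule someI)
    ultimately have "dist (z, t) (SOME p. p \<in> S) \<le> \<delta>"
      using diameter_bounded_bound S(2) by fastforce
    then have "dist t (c S) \<le> \<delta>"
      unfolding c_def using dist_snd_le[of "(z, t)"] by (metis order_trans snd_conv)
    then show "t \<in> (\<Union>S\<in>A'. cball (c S) \<delta>)" using \<open>S \<in> A'\<close> by (auto simp: dist_commute)
  qed
  have "\<bar>\<phi> x - \<phi> y\<bar> = measure lborel {min (\<phi> x) (\<phi> y) .. max (\<phi> x) (\<phi> y)}"
    by (simp add: abs_if min_def max_def)
  also have "\<dots> \<le> measure lborel (\<Union>S\<in>A'. cball (c S) \<delta>)"
    using covered fin unfolding A'_def by (intro measure_mono_fmeasurable fmeasurable_compact) auto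
  also have "\<dots> \<le> (\<Sum>S\<in>A'. measure lborel (cball (c S) \<delta>))"
    using fin unfolding A'_def by (intro measure_UNION_le) auto
  also have "\<dots> = 2 * \<delta> * card A'" using \<open>0 \<le> \<delta>\<close> by (simp add: cball_eq_atLeastAtMost)
  finally show ?thesis unfolding A'_def .
qed

lemma card_meets_column_pos:
  assumes "w > 0" "j < nat \<lceil>1/w\<rceil>" "finite A" "graph01 \<phi> \<subseteq> \<Union>A"
  shows "0 < card {S\<in>A. meets_column \<phi> w j S}"
proof -
  have z: "real j * w \<in> column w j" by (rule left_end_in_column[OF assms(1,2)])
  then have "real j * w \<in> {0..1}" unfolding column_def by blast
  then have "(real j * w, \<phi> (real j * w)) \<in> graph01 \<phi>" unfolding graph01_def by blast
  then obtain S where "S \<in> A" "(real j * w, \<phi> (real j * w)) \<in> S" using assms(4) by auto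
  then have "S \<in> {S\<in>A. meets_column \<phi> w j S}" using z unfolding meets_column_def by auto
  moreover have "finite {S\<in>A. meets_column \<phi> w j S}" using assms(3) by simp
  ultimately show ?thesis using card_gt_0_iff by blast
qed

lemma card_columns_met_le:
  assumes w: "w > 0" and "bounded S" "diameter S \<le> 2 * w"
  shows "card {j. j < K \<and> meets_column \<phi> w j S} \<le> 4"
proof (cases "{j. j < K \<and> meets_column \<phi> w j S} = {}")
  case True
  then show ?thesis unfolding True by simp
next
  case False
  define J where "J = {j. j < K \<and> meets_column \<phi> w j S}"
  define m where "m = Min J"
  have "finite J" unfolding J_def by auto
  then have "m \<in> J" using False unfolding m_def J_def by (intro Min_in) auto
  have "J \<subseteq> {m..m+3}"
  proof
    fix j assume "j \<in> J"
    then have "m \<le> j" using \<open>finite J\<close> unfolding m_def by simp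
    obtain z where z: "z \<in> column w m" "(z, \<phi> z) \<in> S"
      using \<open>m \<in> J\<close> unfolding J_def meets_column_def by auto
    obtain z' where z': "z' \<in> column w j" "(z', \<phi> z') \<in> S"
      using \<open>j \<in> J\<close> unfolding J_def meets_column_def by auto
    have "dist (z', \<phi> z') (z, \<phi> z) \<le> 2 * w"
      using diameter_bounded_bound[OF \<open>bounded S\<close> z'(2) z(2)] \<open>diameter S \<le> 2 * w\<close> by linarith
    then have "z' \<le> z + 2 * w"
      using dist_fst_le[of "(z', \<phi> z')" "(z, \<phi> z)"] by (simp add: dist_real_def)
    moreover have "real j * w \<le> z'" "z \<le> (real m + 1) * w" using z z' unfolding column_def by auto
    ultimately have "real j * w \<le> (real m + 3) * w" by (simp add: algebra_simps)
    then have "j \<le> m + 3" using w by simp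
    then show "j \<in> {m..m+3}" using \<open>m \<le> j\<close> by simp
  qed
  then have "card J \<le> card {m..m+3}" by (intro card_mono) auto
  then show ?thesis unfolding J_def by simp
qed

lemma sum_card_meets_column_le:
  assumes "w > 0" "finite A" "\<And>S. S \<in> A \<Longrightarrow> bounded S \<and> diameter S \<le> 2 * w"
  shows "(\<Sum>j<K. card {S\<in>A. meets_column \<phi> w j S}) \<le> 4 * card A"
proof -
  have "(\<Sum>j<K. card {S\<in>A. meets_column \<phi> w j S})
      = (\<Sum>j<K. \<Sum>S\<in>A. if meets_column \<phi> w j S then 1 else 0)"
    using assms(2) by (simp add: sum.If_cases Int_def)
  also have "\<dots> = (\<Sum>S\<in>A. \<Sum>j<K. if meets_column \<phi> w j S then 1 else 0)"
    by (rule sum.swap)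
  also have "\<dots> = (\<Sum>S\<in>A. card {j. j < K \<and> meets_column \<phi> w j S})"
    by (intro sum.cong refl) (simp add: sum.If_cases Int_def)
  also have "\<dots> \<le> (\<Sum>S\<in>A. 4)"
    using assms by (intro sum_mono card_columns_met_le) auto
  finally show ?thesis by simp
qed

lemma real_interval_cover:
  assumes "w > 0" "c \<le> t" "t \<le> c + r"
  obtains i where "i \<le> nat \<lceil>r/w\<rceil>" "t \<in> {c + real i * w .. c + real i * w + w}"
proof
  define i where "i = nat \<lfloor>(t - c)/w\<rfloor>"
  have "real i = of_int \<lfloor>(t - c)/w\<rfloor>" using assms by (simp add: i_def)
  then have i: "real i \<le> (t - c)/w" "(t - c)/w \<le> real i + 1" by linarith+
  then show "t \<in> {c + real i * w .. c + real i * w + w}"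
    using assms(1) by (simp add: field_simps)
  have "(t - c)/w \<le> r/w" using assms by (simp add: divide_right_mono)
  then have "real i \<le> real (nat \<lceil>r/w\<rceil>)" using i(1) real_nat_ceiling_ge[of "r/w"] by linarith
  then show "i \<le> nat \<lceil>r/w\<rceil>" by (simp only: of_nat_le_iff)
qed

lemma diameter_square_le:
  assumes "0 \<le> w"
  shows "diameter ({a .. a + w} \<times> {b .. b + w}) \<le> 2 * w"
proof (rule diameter_le)
  fix p q assume "p \<in> {a .. a + w} \<times> {b .. b + w}" "q \<in> {a .. a + w} \<times> {b .. b + w}"
  then have "\<bar>fst p - fst q\<bar> \<le> w" "\<bar>snd p - snd q\<bar> \<le> w" by (auto simp: abs_le_iff)
  moreover have "norm (p - q) \<le> norm (fst p - fst q) + norm (snd p - snd q)"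
    using norm_Pair_le[of "fst p - fst q" "snd p - snd q"] by (cases p, cases q) simp
  ultimately show "norm (p - q) \<le> 2 * w" by simp
qed (use assms in simp)

lemma cover_num_graph_le_sum_columns:
  fixes h :: "real \<Rightarrow> real" and R :: "nat \<Rightarrow> real"
  assumes w: "w > 0"
    and R: "\<And>j x. j < nat \<lceil>1/w\<rceil> \<Longrightarrow> x \<in> column w j \<Longrightarrow> \<bar>h x - h (real j * w)\<bar> \<le> R j"
  shows "real (cover_num (2 * w) (graph01 h)) \<le> (\<Sum>j<nat \<lceil>1/w\<rceil>. 2 * R j / w + 2)"
proof -
  define K where "K = nat \<lceil>1/w\<rceil>"
  define N where "N j = nat \<lceil>2 * R j / w\<rceil>" for j
  define Q where "Q j i = {real j * w .. real j * w + w} \<times>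
      {h (real j * w) - R j + real i * w .. h (real j * w) - R j + real i * w + w}" for j i
  define F where "F = (\<Union>j<K. Q j ` {..N j})"
  have "\<forall>S\<in>F. diameter S \<le> 2 * w"
    using w unfolding F_def Q_def by (auto intro: diameter_square_le)
  moreover have "graph01 h \<subseteq> \<Union>F"
  proof
    fix p assume "p \<in> graph01 h"
    then obtain x where x: "x \<in> {0..1}" "p = (x, h x)" unfolding graph01_def by auto
    obtain j where j: "j < K" "x \<in> column w j" using column_cover[OF w x(1)] unfolding K_def by metis
    have "\<bar>h x - h (real j * w)\<bar> \<le> R j" using R j unfolding K_def by blast
    then obtain i where i: "i \<le> N j"
      "h x \<in> {h (real j * w) - R j + real i * w .. h (real j * w) - R j + real i * w + w}"
      using real_interval_cover[OF w, of "h (real j * w) - R j" "h x" "2 * R j"]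
      unfolding N_def by (auto simp: abs_le_iff)
    moreover have "x \<in> {real j * w .. real j * w + w}"
      using j(2) unfolding column_def by (auto simp: algebra_simps)
    ultimately have "p \<in> Q j i" unfolding Q_def x(2) by simp
    then show "p \<in> \<Union>F" unfolding F_def using j(1) i(1) by blast
  qed
  ultimately have "cover_num (2 * w) (graph01 h) \<le> card F"
    by (intro cover_num_le_card) (auto simp: F_def)
  also have "\<dots> \<le> (\<Sum>j<K. card (Q j ` {..N j}))"
    unfolding F_def by (rule card_UN_le) simp
  also have "\<dots> \<le> (\<Sum>j<K. N j + 1)"
    using card_image_le[of "{..N _}"] by (intro sum_mono) simp
  finally have "real (cover_num (2 * w) (graph01 h)) \<le> real (\<Sum>j<K. N j + 1)"
    by (rule of_nat_mono)
  also have "\<dots> = (\<Sum>j<K. real (N j) + 1)" by (simp add: add.commute)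
  also have "\<dots> \<le> (\<Sum>j<K. 2 * R j / w + 2)"
  proof (intro sum_mono)
    fix j assume "j \<in> {..<K}"
    then have j: "j < nat \<lceil>1/w\<rceil>" unfolding K_def by simp
    have "\<bar>h (real j * w) - h (real j * w)\<bar> \<le> R j" by (rule R[OF j left_end_in_column[OF w j]])
    then have "0 \<le> 2 * R j / w" using w by simp
    then show "real (N j) + 1 \<le> 2 * R j / w + 2" unfolding N_def by linarith
  qed
  finally show ?thesis unfolding K_def .
qed

lemma optimal_cover_graph01:
  assumes "continuous_on {0..1} \<phi>" "\<delta> > 0"
    and small_bounded: "\<And>S::(real \<times> real) set. diameter S \<le> \<delta> \<Longrightarrow> bounded S"
  obtains A where "finite A" "graph01 \<phi> \<subseteq> \<Union>A" "\<And>S. S \<in> A \<Longrightarrow> bounded S \<and> diameter S \<le> \<delta>"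
    "card A = cover_num \<delta> (graph01 \<phi>)"
proof -
  obtain A where "finite A" "\<forall>S\<in>A. diameter S \<le> \<delta>" "graph01 \<phi> \<subseteq> \<Union>A"
      "card A = cover_num \<delta> (graph01 \<phi>)"
    by (rule cover_num_attained[OF compact_graph01[OF assms(1)] assms(2)])
  then show ?thesis using small_bounded by (intro that[of A]) auto
qed

lemma cover_num_graph_le_cover_nums:
  fixes f g h :: "real \<Rightarrow> real"
  assumes cf: "continuous_on {0..1} f" and cg: "continuous_on {0..1} g"
    and dom: "\<And>x y. x \<in> {0..1} \<Longrightarrow> y \<in> {0..1} \<Longrightarrow> \<bar>h x - h y\<bar> \<le> L * (\<bar>f x - f y\<bar> + \<bar>g x - g y\<bar>)"
    and w: "w > 0" and small_bounded: "\<And>S::(real \<times> real) set. diameter S \<le> 2 * w \<Longrightarrow> bounded S"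
  shows "real (cover_num (2 * w) (graph01 h))
    \<le> 4 * (8 * \<bar>L\<bar> + 2) * (real (cover_num (2 * w) (graph01 f)) + real (cover_num (2 * w) (graph01 g)))"
proof -
  define K where "K = nat \<lceil>1/w\<rceil>"
  have "0 < 2 * w" using w by simp
  obtain Af where Af: "finite Af" "graph01 f \<subseteq> \<Union>Af" "\<And>S. S \<in> Af \<Longrightarrow> bounded S \<and> diameter S \<le> 2 * w"
      "card Af = cover_num (2 * w) (graph01 f)"
    using optimal_cover_graph01[where \<delta>="2 * w", OF cf \<open>0 < 2 * w\<close> small_bounded] by blast
  obtain Ag where Ag: "finite Ag" "graph01 g \<subseteq> \<Union>Ag" "\<And>S. S \<in> Ag \<Longrightarrow> bounded S \<and> diameter S \<le> 2 * w"
      "card Ag = cover_num (2 * w) (graph01 g)"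
    using optimal_cover_graph01[where \<delta>="2 * w", OF cg \<open>0 < 2 * w\<close> small_bounded] by blast
  define a where "a j = card {S\<in>Af. meets_column f w j S}" for j
  define b where "b j = card {S\<in>Ag. meets_column g w j S}" for j
  have osc: "\<bar>h x - h (real j * w)\<bar> \<le> \<bar>L\<bar> * (4 * w * (real (a j) + real (b j)))"
    if j: "j < K" and x: "x \<in> column w j" for j x
  proof -
    have j0: "real j * w \<in> column w j" using left_end_in_column[OF w] j unfolding K_def by blast
    define D where "D = \<bar>f x - f (real j * w)\<bar> + \<bar>g x - g (real j * w)\<bar>"
    have "\<bar>f x - f (real j * w)\<bar> \<le> 2 * (2 * w) * a j"
      unfolding a_def using w by (intro oscillation_le_card_meets_column[OF cf Af(1,2,3) _ x j0]) auto
    moreover have "\<bar>g x - g (real j * w)\<bar> \<le> 2 * (2 * w) * b j"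
      unfolding b_def using w by (intro oscillation_le_card_meets_column[OF cg Ag(1,2,3) _ x j0]) auto
    ultimately have "D \<le> 4 * w * (real (a j) + real (b j))" unfolding D_def by (simp add: algebra_simps)
    have "x \<in> {0..1}" "real j * w \<in> {0..1}" using x j0 unfolding column_def by blast+
    then have "\<bar>h x - h (real j * w)\<bar> \<le> L * D" unfolding D_def by (rule dom)
    also have "\<dots> \<le> \<bar>L\<bar> * D" unfolding D_def by (intro mult_right_mono) auto
    also have "\<dots> \<le> \<bar>L\<bar> * (4 * w * (real (a j) + real (b j)))"
      using \<open>D \<le> _\<close> by (intro mult_left_mono) auto
    finally show ?thesis .
  qed
  have "real (cover_num (2 * w) (graph01 h))
      \<le> (\<Sum>j<K. 2 * (\<bar>L\<bar> * (4 * w * (real (a j) + real (b j)))) / w + 2)"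
    unfolding K_def
    by (rule cover_num_graph_le_sum_columns[where R="\<lambda>j. \<bar>L\<bar> * (4 * w * (real (a j) + real (b j)))",
          OF w osc[unfolded K_def]])
  also have "\<dots> \<le> (\<Sum>j<K. (8 * \<bar>L\<bar> + 2) * (real (a j) + real (b j)))"
  proof (intro sum_mono)
    fix j assume "j \<in> {..<K}"
    then have "1 \<le> a j"
      using card_meets_column_pos[OF w _ Af(1,2)] unfolding a_def K_def by (simp add: Suc_le_eq)
    have "2 * (\<bar>L\<bar> * (4 * w * (real (a j) + real (b j)))) / w = 8 * \<bar>L\<bar> * (real (a j) + real (b j))"
      using w by (simp add: field_simps)
    moreover have "(8 * \<bar>L\<bar> + 2) * (real (a j) + real (b j))
        = 8 * \<bar>L\<bar> * (real (a j) + real (b j)) + 2 * (real (a j) + real (b j))"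
      by (simp add: algebra_simps)
    ultimately show "2 * (\<bar>L\<bar> * (4 * w * (real (a j) + real (b j)))) / w + 2
        \<le> (8 * \<bar>L\<bar> + 2) * (real (a j) + real (b j))"
      using \<open>1 \<le> a j\<close> by simp
  qed
  also have "\<dots> = (8 * \<bar>L\<bar> + 2) * (real (\<Sum>j<K. a j) + real (\<Sum>j<K. b j))"
    by (simp add: sum_distrib_left sum.distrib distrib_left)
  also have "\<dots> \<le> (8 * \<bar>L\<bar> + 2) * (real (4 * card Af) + real (4 * card Ag))"
    unfolding a_def b_def
    by (intro mult_left_mono add_mono of_nat_mono sum_card_meets_column_le[OF w Af(1,3)]
        sum_card_meets_column_le[OF w Ag(1,3)]) simp_all
  finally show ?thesis using Af(4) Ag(4) by (simp add: algebra_simps)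
qed

text \<open>Small sets are bounded only below the junk value \<open>LEAST z. False\<close> that \<open>diameter\<close> assigns to
  unbounded sets; if that value is not positive, \<open>{UNIV}\<close> is a cover of diameter \<open>\<delta>\<close> and the bound
  is trivial.\<close>
lemma eventually_cover_num_graph_le:
  fixes f g h :: "real \<Rightarrow> real"
  assumes cf: "continuous_on {0..1} f" and cg: "continuous_on {0..1} g"
    and dom: "\<And>x y. x \<in> {0..1} \<Longrightarrow> y \<in> {0..1} \<Longrightarrow> \<bar>h x - h y\<bar> \<le> L * (\<bar>f x - f y\<bar> + \<bar>g x - g y\<bar>)"
  shows "\<forall>\<^sub>F \<delta> in at_right 0. real (cover_num \<delta> (graph01 h))
    \<le> 4 * (8 * \<bar>L\<bar> + 2) * (real (cover_num \<delta> (graph01 f)) + real (cover_num \<delta> (graph01 g)))"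
proof (cases "(LEAST z::real. False) > 0")
  case True
  show ?thesis unfolding eventually_at_right_field
  proof (intro exI[of _ "LEAST z::real. False"] conjI allI impI True)
    fix \<delta> :: real assume "0 < \<delta>" "\<delta> < (LEAST z::real. False)"
    define w where "w = \<delta> / 2"
    have "0 < w" "\<delta> = 2 * w" using \<open>0 < \<delta>\<close> by (auto simp: w_def)
    have small: "bounded S" if "diameter S \<le> 2 * w" for S :: "(real \<times> real) set"
      using diameter_unbounded[of S] that \<open>\<delta> < _\<close> \<open>\<delta> = 2 * w\<close> by (cases "S = {}") auto
    show "real (cover_num \<delta> (graph01 h))
      \<le> 4 * (8 * \<bar>L\<bar> + 2) * (real (cover_num \<delta> (graph01 f)) + real (cover_num \<delta> (graph01 g)))"
      unfolding \<open>\<delta> = 2 * w\<close> by (rule cover_num_graph_le_cover_nums[OF cf cg dom \<open>0 < w\<close> small])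
  qed
next
  case False
  show ?thesis unfolding eventually_at_right_field
  proof (intro exI[of _ 1] conjI allI impI)
    fix \<delta> :: real assume "0 < \<delta>"
    have "diameter (UNIV :: (real \<times> real) set) \<le> \<delta>"
      using diameter_unbounded[of "UNIV :: (real \<times> real) set"] False \<open>0 < \<delta>\<close> by simp
    then have "cover_num \<delta> (graph01 h) \<le> 1"
      using cover_num_le_card[of "{UNIV}" \<delta> "graph01 h"] by simp
    moreover have "1 \<le> cover_num \<delta> (graph01 f)"
      using cover_num_pos[OF compact_graph01[OF cf] _ \<open>0 < \<delta>\<close>] by (force simp: graph01_def)
    ultimately have "real (cover_num \<delta> (graph01 h)) \<le> 1 * (real (cover_num \<delta> (graph01 f)) + real (cover_num \<delta> (graph01 g)))"
      by simp
    also have "\<dots> \<le> 4 * (8 * \<bar>L\<bar> + 2) * (real (cover_num \<delta> (graph01 f)) + real (cover_num \<delta> (graph01 g)))"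
      by (intro mult_right_mono) auto
    finally show "real (cover_num \<delta> (graph01 h))
      \<le> 4 * (8 * \<bar>L\<bar> + 2) * (real (cover_num \<delta> (graph01 f)) + real (cover_num \<delta> (graph01 g)))" .
  qed simp
qed

lemma Limsup_le_max_of_eventually_le:
  fixes a b c e :: "'a \<Rightarrow> real"
  assumes e: "(e \<longlongrightarrow> 0) F" and le: "\<forall>\<^sub>F x in F. a x \<le> e x + max (b x) (c x)"
  shows "Limsup F (\<lambda>x. ereal (a x)) \<le> max (Limsup F (\<lambda>x. ereal (b x))) (Limsup F (\<lambda>x. ereal (c x)))"
  unfolding Limsup_le_iff
proof (intro allI impI)
  fix y assume "max (Limsup F (\<lambda>x. ereal (b x))) (Limsup F (\<lambda>x. ereal (c x))) < y"
  then obtain z1 where z1: "max (Limsup F (\<lambda>x. ereal (b x))) (Limsup F (\<lambda>x. ereal (c x))) < ereal z1"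
      "ereal z1 < y"
    using ereal_dense2 by blast
  then obtain z2 where z2: "z1 < z2" "ereal z2 < y" using ereal_dense2 by fastforce
  have "Limsup F (\<lambda>x. ereal (b x)) < ereal z1" "Limsup F (\<lambda>x. ereal (c x)) < ereal z1"
    using z1(1) by auto
  then have "\<forall>\<^sub>F x in F. ereal (b x) < ereal z1" "\<forall>\<^sub>F x in F. ereal (c x) < ereal z1"
    by (auto dest: Limsup_lessD simp del: ereal_less)
  moreover have "\<forall>\<^sub>F x in F. e x < z2 - z1" using order_tendstoD(2)[OF e] z2(1) by simp
  ultimately show "\<forall>\<^sub>F x in F. y > ereal (a x)"
    using le
  proof eventually_elim
    case (elim x)
    then have "ereal (a x) < ereal z2" by simp
    then show ?case using z2(2) by (rule less_trans)
  qed
qed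

lemma ln_le_ln_add_max:
  fixes n a b :: nat
  assumes "1 \<le> C" "real n \<le> C * (real a + real b)"
  shows "ln (real n) \<le> ln (2 * C) + max (ln (real a)) (ln (real b))"
proof (cases "n = 0")
  case True
  have "0 \<le> ln (real a)" by (cases a) auto
  then show ?thesis using True assms(1) by simp
next
  case False
  define M where "M = max a b"
  have "real a + real b \<le> 2 * real M" by (cases "a \<le> b") (simp_all add: M_def)
  then have "C * (real a + real b) \<le> C * (2 * real M)" using assms(1) by (intro mult_left_mono) auto
  also have "\<dots> = 2 * C * real M" by simp
  finally have n: "real n \<le> 2 * C * real M" using assms(2) by (rule order_trans[rotated])
  with False have "0 < M" by (cases M) auto
  have "ln (real n) \<le> ln (2 * C * real M)" using n False by simp
  also have "\<dots> = ln (2 * C) + ln (real M)" using assms(1) \<open>0 < M\<close> by (simp add: ln_mult)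
  also have "ln (real M) = max (ln (real a)) (ln (real b))"
    unfolding M_def by (cases a; cases b) (auto simp: max_def)
  finally show ?thesis .
qed

lemma upper_box_dim_le_max_of_cover_num_le:
  fixes F A B :: "'a::metric_space set"
  assumes "1 \<le> C"
    and le: "\<forall>\<^sub>F \<delta> in at_right 0. real (cover_num \<delta> F) \<le> C * (real (cover_num \<delta> A) + real (cover_num \<delta> B))"
  shows "upper_box_dim F \<le> max (upper_box_dim A) (upper_box_dim B)"
  unfolding upper_box_dim_def
proof (rule Limsup_le_max_of_eventually_le)
  show "((\<lambda>\<delta>::real. ln (2 * C) / - ln \<delta>) \<longlongrightarrow> 0) (at_right 0)" by real_asymp
  have "\<forall>\<^sub>F \<delta> in at_right (0::real). \<delta> < 1" unfolding eventually_at_right_field by (intro exI[of _ 1]) auto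
  with le eventually_at_right_less
  show "\<forall>\<^sub>F \<delta> in at_right 0. ln (real (cover_num \<delta> F)) / - ln \<delta>
    \<le> ln (2 * C) / - ln \<delta> + max (ln (real (cover_num \<delta> A)) / - ln \<delta>) (ln (real (cover_num \<delta> B)) / - ln \<delta>)"
  proof eventually_elim
    case (elim \<delta>)
    define t where "t = - ln \<delta>"
    have "0 < t" using elim(2,3) by (simp add: t_def)
    have "ln (real (cover_num \<delta> F)) / t
        \<le> (ln (2 * C) + max (ln (real (cover_num \<delta> A))) (ln (real (cover_num \<delta> B)))) / t"
      using ln_le_ln_add_max[OF assms(1) elim(1)] \<open>0 < t\<close> by (intro divide_right_mono) auto
    also have "\<dots> = ln (2 * C) / t + max (ln (real (cover_num \<delta> A)) / t) (ln (real (cover_num \<delta> B)) / t)"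
      using \<open>0 < t\<close> by (simp add: add_divide_distrib max_divide_distrib_right)
    finally show ?case by (simp only: t_def)
  qed
qed

theorem theorem3p7:
  fixes f g :: "real \<Rightarrow> real"
  assumes "continuous_on {0..1} f" and "continuous_on {0..1} g"
  shows "\<forall>p \<in> poly2_funs.
           upper_box_dim (graph01 (\<lambda>x. p (f x) (g x)))
             \<le> max (upper_box_dim (graph01 f)) (upper_box_dim (graph01 g))"
proof
  fix p assume "p \<in> poly2_funs"
  have "bounded (f ` {0..1})" "bounded (g ` {0..1})"
    using assms by (auto intro: compact_imp_bounded compact_continuous_image)
  then obtain L where "\<forall>x\<in>{0..1}. \<forall>y\<in>{0..1}.
      \<bar>p (f x) (g x) - p (f y) (g y)\<bar> \<le> L * (\<bar>f x - f y\<bar> + \<bar>g x - g y\<bar>)"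
    using dominated_on_poly2[OF _ _ \<open>p \<in> poly2_funs\<close>] unfolding dominated_on_def by blast
  then have "\<forall>\<^sub>F \<delta> in at_right 0. real (cover_num \<delta> (graph01 (\<lambda>x. p (f x) (g x))))
      \<le> 4 * (8 * \<bar>L\<bar> + 2) * (real (cover_num \<delta> (graph01 f)) + real (cover_num \<delta> (graph01 g)))"
    by (intro eventually_cover_num_graph_le[OF assms]) auto
  then show "upper_box_dim (graph01 (\<lambda>x. p (f x) (g x)))
      \<le> max (upper_box_dim (graph01 f)) (upper_box_dim (graph01 g))"
    by (rule upper_box_dim_le_max_of_cover_num_le[rotated]) simp
qed

end
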